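(* Let $K$ be a virtual knot and $r\geq 2$ an integer, and let $L(K;r)=K_1\cup\dots\cup K_r$ be the $r$-multiplexed virtual link of $K$. Then for all integers $i,j$ with $1\leq i\neq j\leq r$, \[\mathrm{Lk}(K_i,K_j)=\sum_{n\equiv i-j \pmod r} J_n(K).\]
   Context: Virtual link diagrams have real (positive/negative) and virtual crossings; virtual links are equivalence classes under generalized Reidemeister moves (R1–R3, VR1–VR4). $r$-multiplexing: for a virtual knot diagram $D$ and $r\geq2$, $L(D;r)$ is obtained by replacing $D$ with a bundle of $r$ parallel strands, positions numbered $1,\dots,r$ left to right w.r.t. the orientation. At each positive (resp. negative) crossing of $D$ the two bundles cross in an $r\times r$ grid where the position-$p$ strand of the over-bundle crosses the position-$p$ strand of the under-bundle at a positive (resp. negative) real crossing with the over-bundle strand on top, all other grid crossings being virtual. At each virtual crossing of $D$ the bundles cross in an $r\times r$ grid of virtual crossings, and each bundle additionally has its strands cyclically shifted via $r-1$ virtual crossings: position $p$ goes to $p-1\pmod r$ if the other string of $D$ crosses the bundle from left to right, and to $p+1 \pmod r$ if from right to left. The result has $r$ components; with a base point on $D$, the $i$th component is the one through position $i$ there. The equivalence class $L(K;r)$ of $L(D;r)$ for a diagram $D$ of $K$ is independent of $D$. Index: for a real crossing $c$ of a diagram, its specified path $\rho$ runs along the diagram from the overcrossing to the undercrossing at $c$; walking along $\rho$, each real crossing on $\rho$ contributes $+1$ if the other string crosses $\rho$ from left to right and $-1$ otherwise; $\mathrm{ind}(c)$ is the sum. For a virtual knot diagram $D$ and integer $n$,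 $J_n(D)$ is the sum of signs of real crossings of index $n$; for $n\neq0$ it is an invariant $J_n(K)$ of the virtual knot $K$ (the $n$-writhe). $(i,j)$-linking number: for a diagram $D_1\cup\dots\cup D_r$ of a virtual link and $i\neq j$, $\mathrm{Lk}(K_i,K_j)$ is the sum of signs of real crossings where $D_i$ passes over $D_j$; it is a virtual link invariant. *)

theory Defs
  imports Main "HOL-Number_Theory.Cong"
begin

(* A virtual knot diagram D (one component, with a base point) is encoded combinatorially.
   Walking once around D from the base point along its orientation we meet 2*nc D
   passages, numbered 0 .. 2*nc D - 1; every crossing (real or virtual), numbered
   0 .. nc D - 1, is met exactly twice.
   cr t   : the crossing met at passage t
   virt k : crossing k is virtual
   ovr t  : at passage t the diagram passes over (relevant for real crossings)
   lr t   : at passage t the other string of D crosses the present strand from left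
            to right (w.r.t. the orientation of the present strand). *)
record vdiag =
  nc   :: nat
  cr   :: "nat \<Rightarrow> nat"
  virt :: "nat \<Rightarrow> bool"
  ovr  :: "nat \<Rightarrow> bool"
  lr   :: "nat \<Rightarrow> bool"

definition npass :: "vdiag \<Rightarrow> nat" where
  "npass D = 2 * nc D"

definition partner :: "vdiag \<Rightarrow> nat \<Rightarrow> nat" where
  "partner D t = (THE s. s < npass D \<and> s \<noteq> t \<and> cr D s = cr D t)"

(* Planarity (realisability in the plane) of the underlying 4-valent curve:
   half-edges at passage t are (t,True) = outgoing, (t,False) = incoming;
   the counterclockwise successor of a half-edge at a crossing is determined by lr.
   Darts (e,True)/(e,False) traverse edge e (from passage e to passage e+1 mod 2n)
   forwards/backwards.  The face-tracing permutation has exactly nc+2 orbits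
   iff the curve embeds in the sphere (Euler: V - E + F = 2 with V = n, E = 2n). *)
definition arrive :: "vdiag \<Rightarrow> nat \<times> bool \<Rightarrow> nat \<times> bool" where
  "arrive D d = (if snd d then (Suc (fst d) mod npass D, False) else (fst d, True))"

definition leave :: "vdiag \<Rightarrow> nat \<times> bool \<Rightarrow> nat \<times> bool" where
  "leave D h = (if snd h then (fst h, True) else ((fst h + npass D - 1) mod npass D, False))"

definition next_ccw :: "vdiag \<Rightarrow> nat \<times> bool \<Rightarrow> nat \<times> bool" where
  "next_ccw D h = (partner D (fst h), if lr D (fst h) then \<not> snd h else snd h)"

definition face_step :: "vdiag \<Rightarrow> nat \<times> bool \<Rightarrow> nat \<times> bool" where
  "face_step D d = leave D (next_ccw D (arrive D d))"

definition darts :: "vdiag \<Rightarrow> (nat \<times> bool) set" where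
  "darts D = {..<npass D} \<times> UNIV"

definition num_faces :: "vdiag \<Rightarrow> nat" where
  "num_faces D = card ((\<lambda>d. {d'. (d, d') \<in> {(x, face_step D x) | x. x \<in> darts D}\<^sup>*}) ` darts D)"

definition planar :: "vdiag \<Rightarrow> bool" where
  "planar D \<longleftrightarrow> nc D = 0 \<or> num_faces D = nc D + 2"

definition wf_vdiag :: "vdiag \<Rightarrow> bool" where
  "wf_vdiag D \<longleftrightarrow>
     (\<forall>t < npass D. cr D t < nc D) \<and>
     (\<forall>k < nc D. card {t. t < npass D \<and> cr D t = k} = 2) \<and>
     (\<forall>t < npass D. \<forall>s < npass D. t \<noteq> s \<and> cr D t = cr D s \<longrightarrow>
         lr D s = (\<not> lr D t) \<and> (\<not> virt D (cr D t) \<longrightarrow> ovr D s = (\<not> ovr D t))) \<and>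
     planar D"

definition real_crossings :: "vdiag \<Rightarrow> nat set" where
  "real_crossings D = {k. k < nc D \<and> \<not> virt D k}"

definition opass :: "vdiag \<Rightarrow> nat \<Rightarrow> nat" where
  "opass D k = (THE t. t < npass D \<and> cr D t = k \<and> ovr D t)"

definition upass :: "vdiag \<Rightarrow> nat \<Rightarrow> nat" where
  "upass D k = (THE t. t < npass D \<and> cr D t = k \<and> \<not> ovr D t)"

(* sign of a real crossing: positive iff the under string crosses the over string
   from right to left (right-handed crossing) *)
definition csign :: "vdiag \<Rightarrow> nat \<Rightarrow> int" where
  "csign D k = (if lr D (opass D k) then -1 else 1)"

(* passages strictly between passage a and passage b, walking forward from a *)
definition on_path :: "vdiag \<Rightarrow> nat \<Rightarrow> nat \<Rightarrow> nat \<Rightarrow> bool" where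
  "on_path D a b s \<longleftrightarrow> s < npass D \<and>
     0 < (s + npass D - a) mod npass D \<and>
     (s + npass D - a) mod npass D < (b + npass D - a) mod npass D"

(* index of a real crossing: along the specified path from its overcrossing to its
   undercrossing, each real crossing passage contributes +1 / -1 *)
definition ind :: "vdiag \<Rightarrow> nat \<Rightarrow> int" where
  "ind D k = (\<Sum>s \<in> {s. on_path D (opass D k) (upass D k) s \<and> \<not> virt D (cr D s)}.
                 if lr D s then 1 else -1)"

definition J :: "vdiag \<Rightarrow> int \<Rightarrow> int" where
  "J D n = (\<Sum>k \<in> {k \<in> real_crossings D. ind D k = n}. csign D k)"

(* Net cyclic shift of bundle positions accumulated at the virtual
   crossings met before passage t (position p \<mapsto> p-1 if the other string crosses the
   bundle from left to right, p \<mapsto> p+1 otherwise). *)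
definition shift :: "vdiag \<Rightarrow> nat \<Rightarrow> int" where
  "shift D t = (\<Sum>s \<in> {s. s < t \<and> virt D (cr D s)}. if lr D s then -1 else 1)"

(* The component (numbered 1..r by the position at the base point) of L(D;r) to which
   the strand at position p (1..r) of the bundle at passage t belongs. *)
definition mcomp :: "vdiag \<Rightarrow> nat \<Rightarrow> nat \<Rightarrow> nat \<Rightarrow> nat" where
  "mcomp D r t p = nat ((int p - 1 - shift D t) mod int r) + 1"

(* Real crossings of L(D;r): pairs (k,p), k a real crossing of D, p in 1..r; the
   position-p strand of the over-bundle crosses over the position-p strand of the
   under-bundle with the sign of k.  All other crossings of L(D;r) are virtual. *)
definition mplx_real_crossings :: "vdiag \<Rightarrow> nat \<Rightarrow> (nat \<times> nat) set" where
  "mplx_real_crossings D r = real_crossings D \<times> {1..r}"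

definition mplx_over_comp :: "vdiag \<Rightarrow> nat \<Rightarrow> nat \<times> nat \<Rightarrow> nat" where
  "mplx_over_comp D r c = mcomp D r (opass D (fst c)) (snd c)"

definition mplx_under_comp :: "vdiag \<Rightarrow> nat \<Rightarrow> nat \<times> nat \<Rightarrow> nat" where
  "mplx_under_comp D r c = mcomp D r (upass D (fst c)) (snd c)"

definition mplx_sign :: "vdiag \<Rightarrow> nat \<Rightarrow> nat \<times> nat \<Rightarrow> int" where
  "mplx_sign D r c = csign D (fst c)"

definition Lk_mplx :: "vdiag \<Rightarrow> nat \<Rightarrow> nat \<Rightarrow> nat \<Rightarrow> int" where
  "Lk_mplx D r i j = (\<Sum>c \<in> {c \<in> mplx_real_crossings D r.
        mplx_over_comp D r c = i \<and> mplx_under_comp D r c = j}. mplx_sign D r c)"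

end

(* At a real crossing of D the strands in equal positions of the two bundles belong to
   components whose numbers differ by the net cyclic shift picked up at the virtual crossings
   along the path from the over- to the under-passage. Hence Lk(K_i, K_j) is the sum of the
   signs of the real crossings whose shift difference is congruent to i - j modulo r, and it
   remains to see that this shift difference is the index. The path closes up to a loop at the
   crossing, and since the underlying curve is planar the loop meets the rest of the diagram with
   algebraic intersection number zero, so its real and virtual crossings contribute opposite
   amounts. Planarity enters through Euler's formula: adding the edges of D one at a time to
   its crossings, each edge of a spanning tree merges two faces, so each remaining edge must
   split one; this makes every integral cycle a boundary of faces. *)

theory Submission
  imports Defs "HOL-Combinatorics.Transposition"
begin

section \<open>Orbits of a function within a set\<close>

text \<open>The points reachable from \<open>x\<close> by applying \<open>f\<close> to points of \<open>A\<close>; \<open>num_faces\<close> counts faces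
  in this form.\<close>

definition orbit_in :: "('a \<Rightarrow> 'a) \<Rightarrow> 'a set \<Rightarrow> 'a \<Rightarrow> 'a set" where
  "orbit_in f A x = {y. (x, y) \<in> {(z, f z) | z. z \<in> A}\<^sup>*}"

lemma orbit_in_self: "x \<in> orbit_in f A x"
  by (simp add: orbit_in_def)

lemma orbit_in_step: "y \<in> orbit_in f A x \<Longrightarrow> y \<in> A \<Longrightarrow> f y \<in> orbit_in f A x"
  unfolding orbit_in_def by (auto intro: rtrancl_into_rtrancl)

lemma orbit_in_induct [consumes 1, case_names base step]:
  assumes "y \<in> orbit_in f A x" and "P x"
    and "\<And>z. z \<in> orbit_in f A x \<Longrightarrow> z \<in> A \<Longrightarrow> P z \<Longrightarrow> P (f z)"
  shows "P y"
proof -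
  have "(x, y) \<in> {(z, f z) | z. z \<in> A}\<^sup>*"
    using assms(1) by (simp add: orbit_in_def)
  then show ?thesis
  proof (induction rule: rtrancl_induct)
    case (step y z)
    then have "y \<in> orbit_in f A x" by (simp add: orbit_in_def)
    with step assms(3) show ?case by auto
  qed (fact assms(2))
qed

lemma orbit_in_trans: "y \<in> orbit_in f A x \<Longrightarrow> z \<in> orbit_in f A y \<Longrightarrow> z \<in> orbit_in f A x"
  unfolding orbit_in_def by (auto elim: rtrancl_trans)

lemma orbit_in_closed:
  assumes "y \<in> orbit_in f A x" "x \<in> B" "\<And>z. z \<in> A \<Longrightarrow> z \<in> B \<Longrightarrow> f z \<in> B"
  shows "y \<in> B"
  using assms(1) by (induction rule: orbit_in_induct) (use assms in auto)

lemma orbit_in_invariant: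
  assumes "y \<in> orbit_in f A x" "\<And>z. z \<in> A \<Longrightarrow> W (f z) = W z"
  shows "W y = W x"
  using assms(1) by (induction rule: orbit_in_induct) (use assms in auto)

lemma orbit_in_cong:
  assumes "\<And>z. z \<in> orbit_in f A x \<Longrightarrow> z \<in> A \<Longrightarrow> g z = f z"
  shows "orbit_in g A x = orbit_in f A x"
proof
  show "orbit_in g A x \<subseteq> orbit_in f A x"
  proof
    fix y assume "y \<in> orbit_in g A x"
    then show "y \<in> orbit_in f A x"
    proof (induction rule: orbit_in_induct)
      case (step z)
      then show ?case using assms orbit_in_step[of z f A x] by simp
    qed (rule orbit_in_self)
  qed
  show "orbit_in f A x \<subseteq> orbit_in g A x"
  proof
    fix y assume "y \<in> orbit_in f A x"
    then show "y \<in> orbit_in g A x"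
    proof (induction rule: orbit_in_induct)
      case (step z)
      then show ?case using assms orbit_in_step[of z g A x] by simp
    qed (rule orbit_in_self)
  qed
qed

lemma orbit_in_conj:
  assumes h: "\<And>x. x \<in> A \<Longrightarrow> h x \<in> B" and comm: "\<And>x. x \<in> A \<Longrightarrow> g (h x) = h (f x)"
    and f: "\<And>x. x \<in> A \<Longrightarrow> f x \<in> A" and x: "x \<in> A"
  shows "orbit_in g B (h x) = h ` orbit_in f A x"
proof
  have sub: "orbit_in f A x \<subseteq> A"
    using orbit_in_closed[of _ f A x A] f x by blast
  show "orbit_in g B (h x) \<subseteq> h ` orbit_in f A x"
  proof
    fix d assume "d \<in> orbit_in g B (h x)"
    then show "d \<in> h ` orbit_in f A x"
    proof (induction rule: orbit_in_induct)
      case base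
      show ?case using orbit_in_self[of x f A] by (rule imageI)
    next
      case (step z)
      then obtain y where y: "y \<in> orbit_in f A x" "z = h y" by blast
      with sub have "g z = h (f y)" using comm by blast
      moreover have "f y \<in> orbit_in f A x" using orbit_in_step[OF y(1)] y(1) sub by blast
      ultimately show ?case by blast
    qed
  qed
  show "h ` orbit_in f A x \<subseteq> orbit_in g B (h x)"
  proof
    fix d assume "d \<in> h ` orbit_in f A x"
    then obtain y where y: "y \<in> orbit_in f A x" "d = h y" by blast
    have "h y \<in> orbit_in g B (h x)"
      using y(1)
    proof (induction rule: orbit_in_induct)
      case (step z)
      then show ?case using orbit_in_step[OF step(3) h[OF step(2)]] comm[OF step(2)] by simp
    qed (rule orbit_in_self)
    with y show "d \<in> orbit_in g B (h x)" by simp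
  qed
qed

lemma card_orbits_conj:
  assumes bij: "bij_betw h A B" and comm: "\<And>x. x \<in> A \<Longrightarrow> g (h x) = h (f x)"
    and f: "\<And>x. x \<in> A \<Longrightarrow> f x \<in> A"
  shows "card (orbit_in g B ` B) = card (orbit_in f A ` A)"
proof -
  have h: "\<And>x. x \<in> A \<Longrightarrow> h x \<in> B"
    using bij by (auto simp: bij_betw_def)
  have conj: "orbit_in g B (h x) = h ` orbit_in f A x" if "x \<in> A" for x
    by (rule orbit_in_conj) (use h comm f that in auto)
  have "orbit_in g B ` B = (\<lambda>x. orbit_in g B (h x)) ` A"
    using bij by (auto simp: bij_betw_def)
  also have "\<dots> = image h ` orbit_in f A ` A"
    using conj by (simp add: image_image)
  finally have "orbit_in g B ` B = image h ` orbit_in f A ` A" .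
  moreover have "inj_on (image h) (orbit_in f A ` A)"
  proof (rule inj_on_subset)
    show "inj_on (image h) (Pow A)"
      using bij by (simp add: bij_betw_def inj_on_image_Pow)
    show "orbit_in f A ` A \<subseteq> Pow A"
      using orbit_in_closed[of _ f A _ A] f by blast
  qed
  ultimately show ?thesis
    by (simp add: card_image)
qed

locale permutation_on =
  fixes f :: "'a \<Rightarrow> 'a" and A :: "'a set"
  assumes finite: "finite A" and maps_to: "\<And>x. x \<in> A \<Longrightarrow> f x \<in> A" and inj: "inj_on f A"
begin

lemma orbit_in_subset: "x \<in> A \<Longrightarrow> orbit_in f A x \<subseteq> A"
  using orbit_in_closed[of _ f A x A] maps_to by blast

lemma orbit_in_image:
  assumes x: "x \<in> A" shows "x \<in> orbit_in f A (f x)"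
proof -
  let ?O = "orbit_in f A (f x)"
  have sub: "?O \<subseteq> A"
    using orbit_in_subset maps_to x by blast
  have "finite ?O"
    using finite sub by (rule finite_subset[rotated])
  moreover have "f ` ?O \<subseteq> ?O"
  proof (rule image_subsetI)
    fix y assume "y \<in> ?O"
    with sub show "f y \<in> ?O" by (intro orbit_in_step) auto
  qed
  moreover have "inj_on f ?O"
    using inj sub by (rule inj_on_subset)
  ultimately have "f ` ?O = ?O"
    by (rule endo_inj_surj)
  then have "f x \<in> f ` ?O"
    by (simp add: orbit_in_self)
  then obtain w where w: "w \<in> ?O" "f x = f w"
    by (rule imageE)
  then have "x = w"
    using inj_onD[OF inj w(2) x] sub by blast
  with w show ?thesis by simp
qed

lemma orbit_in_sym:
  assumes "x \<in> A" "y \<in> orbit_in f A x" shows "x \<in> orbit_in f A y"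
  using assms(2)
proof (induction rule: orbit_in_induct)
  case (step z)
  show ?case
    by (rule orbit_in_trans[OF orbit_in_image[OF step(2)] step(3)])
qed (rule orbit_in_self)

lemma orbit_in_eq:
  assumes "x \<in> A" "y \<in> orbit_in f A x" shows "orbit_in f A y = orbit_in f A x"
  using orbit_in_trans[OF assms(2)] orbit_in_trans[OF orbit_in_sym[OF assms]] by blast

lemma orbit_in_iff_eq:
  assumes "x \<in> A" shows "y \<in> orbit_in f A x \<longleftrightarrow> orbit_in f A y = orbit_in f A x"
  using orbit_in_eq[OF assms, of y] orbit_in_self[of y f A] by auto

lemma orbit_in_step_iff:
  assumes "x \<in> A" shows "f x \<in> orbit_in f A y \<longleftrightarrow> x \<in> orbit_in f A y"
  using orbit_in_step[of x f A y] orbit_in_trans[OF _ orbit_in_image[OF assms], of y] assms by blast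

lemma card_orbits_split:
  assumes "a \<in> A" "b \<in> A"
  shows "card (orbit_in f A ` A) =
    card (orbit_in f A ` {x \<in> A. a \<notin> orbit_in f A x \<and> b \<notin> orbit_in f A x}) +
    (if b \<in> orbit_in f A a then 1 else 2)"
proof -
  let ?O = "orbit_in f A"
  let ?R = "?O ` {x \<in> A. a \<notin> ?O x \<and> b \<notin> ?O x}"
  have "?O ` A \<subseteq> ?R \<union> {?O a, ?O b}"
  proof
    fix S assume "S \<in> ?O ` A"
    then obtain x where x: "x \<in> A" "S = ?O x" by blast
    then show "S \<in> ?R \<union> {?O a, ?O b}"
      using orbit_in_eq[OF x(1), of a] orbit_in_eq[OF x(1), of b] by auto
  qed
  moreover have "?R \<union> {?O a, ?O b} \<subseteq> ?O ` A"
    using assms by auto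
  ultimately have eq: "?O ` A = ?R \<union> {?O a, ?O b}" by (rule antisym)
  have disjoint: "?R \<inter> {?O a, ?O b} = {}"
    using orbit_in_self[of a f A] orbit_in_self[of b f A] by auto
  have two: "card {?O a, ?O b} = (if b \<in> ?O a then 1 else 2)"
    using orbit_in_iff_eq[OF assms(1), of b] by auto
  have "card (?R \<union> {?O a, ?O b}) = card ?R + card {?O a, ?O b}"
    by (rule card_Un_disjoint) (use finite disjoint in auto)
  then show ?thesis
    unfolding eq two .
qed

end

locale permutation_on_transpose = permutation_on +
  fixes a b
  assumes a: "a \<in> A" and b: "b \<in> A" and distinct: "a \<noteq> b"
begin

abbreviation g where "g \<equiv> f \<circ> Transposition.transpose a b"

lemma transpose_in: "x \<in> A \<Longrightarrow> Transposition.transpose a b x \<in> A"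
  using a b by (simp add: transpose_def)

lemma permutation_on_comp_transpose: "permutation_on g A"
proof
  show "finite A" by (rule finite)
  show "g x \<in> A" if "x \<in> A" for x
    using that transpose_in maps_to by simp
  show "inj_on g A"
  proof (rule inj_onI)
    fix x y assume "x \<in> A" "y \<in> A" "g x = g y"
    then have "Transposition.transpose a b x = Transposition.transpose a b y"
      using inj transpose_in by (simp add: inj_on_def)
    then show "x = y" by (rule transpose_eq_imp_eq)
  qed
qed

lemma orbit_in_transpose_eq:
  "x \<in> A \<Longrightarrow> a \<notin> orbit_in f A x \<Longrightarrow> b \<notin> orbit_in f A x \<Longrightarrow> orbit_in g A x = orbit_in f A x"
  by (rule orbit_in_cong) (metis comp_apply transpose_apply_other)

lemma orbit_in_transpose_merge:
  assumes "b \<notin> orbit_in f A a" shows "b \<in> orbit_in g A a"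
proof -
  have a_notin: "a \<notin> orbit_in f A (f b)"
    using assms orbit_in_sym[OF b] orbit_in_trans[OF orbit_in_step[OF orbit_in_self b]] by blast
  have "y \<in> orbit_in g A (f b) \<or> b \<in> orbit_in g A (f b)" if "y \<in> orbit_in f A (f b)" for y
    using that
  proof (induction rule: orbit_in_induct)
    case (step z)
    have "z \<noteq> a"
      using step(1) a_notin by blast
    then have "z = b \<or> g z = f z"
      by (auto simp: transpose_def)
    moreover have "z \<in> orbit_in g A (f b) \<Longrightarrow> g z \<in> orbit_in g A (f b)"
      by (fact orbit_in_step[where f = g and x = "f b", OF _ step(2)])
    ultimately show ?case
      using step(3) by metis
  qed (simp add: orbit_in_self)
  then have "b \<in> orbit_in g A (f b)"
    using orbit_in_image[OF b] by blast
  moreover have "f b \<in> orbit_in g A a"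
    using orbit_in_step[OF orbit_in_self a, of g] by simp
  ultimately show ?thesis
    by (rule orbit_in_trans[rotated])
qed

text \<open>Composing with the transposition of \<open>a\<close> and \<open>b\<close> merges their orbits if these are distinct
  and splits their common orbit otherwise.\<close>

lemma card_orbits_transpose:
  "card (orbit_in g A ` A) + (if b \<in> orbit_in f A a then 1 else 2) =
   card (orbit_in f A ` A) + (if b \<in> orbit_in g A a then 1 else 2)"
proof -
  interpret G: permutation_on_transpose g A a b
    using permutation_on_comp_transpose a b distinct
    by (simp add: permutation_on_transpose_def permutation_on_transpose_axioms_def)
  have "g \<circ> Transposition.transpose a b = f"
    by (simp add: comp_assoc transpose_comp_involutory)
  then have same: "orbit_in g A x = orbit_in f A x"
    if "x \<in> A"
      and "a \<notin> orbit_in g A x \<and> b \<notin> orbit_in g A x \<or> a \<notin> orbit_in f A x \<and> b \<notin> orbit_in f A x"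
    for x
    using that orbit_in_transpose_eq G.orbit_in_transpose_eq by metis
  let ?Sg = "{x \<in> A. a \<notin> orbit_in g A x \<and> b \<notin> orbit_in g A x}"
  let ?Sf = "{x \<in> A. a \<notin> orbit_in f A x \<and> b \<notin> orbit_in f A x}"
  have "?Sg = ?Sf"
    by (rule Collect_cong) (use same in blast)
  then have "orbit_in g A ` ?Sg = orbit_in f A ` ?Sf"
    by (rule image_cong) (intro same; auto)
  then have "card (orbit_in g A ` ?Sg) = card (orbit_in f A ` ?Sf)"
    by (rule arg_cong)
  then show ?thesis
    by (simp only: card_orbits_split[OF a b] G.card_orbits_split[OF a b] ac_simps)
qed

end

section \<open>The face permutations of a diagram\<close>

lemma add_diff_mod_cases:
  fixes x a N :: nat
  assumes "x < N" "a < N"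
  shows "(x + N - a) mod N = (if a \<le> x then x - a else x + N - a)"
proof (cases "a \<le> x")
  case True
  then have shift: "x + N - a = (x - a) + N"
    by simp
  have "(x + N - a) mod N = (x - a) mod N"
    unfolding shift by (rule mod_add_self2)
  then show ?thesis
    using True assms by simp
qed (use assms in simp)

lemma card_Collect_less_Suc:
  "card {x. x < Suc m \<and> P x} = card {x. x < m \<and> P x} + (if P m then 1 else 0)"
proof -
  have "{x. x < Suc m \<and> P x} = {x. x < m \<and> P x} \<union> (if P m then {m} else {})"
    by (auto simp: less_Suc_eq)
  then show ?thesis by (simp add: card_Un_disjoint)
qed

lemma sum_lessThan_if_less:
  fixes t M :: nat
  shows "t \<le> M \<Longrightarrow> (\<Sum>s<M. if s < t then g s else 0) = (\<Sum>s<t. g s)"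
  by (simp add: sum.inter_filter[symmetric] lessThan_def) (metis (lifting) less_le_trans)

lemma pred_mod_cases:
  fixes t N :: nat
  shows "t < N \<Longrightarrow> (t + N - 1) mod N = (if t = 0 then N - 1 else t - 1)"
  using add_diff_mod_cases[of t N 1] by (cases "t = 0") auto

locale diagram =
  fixes D :: vdiag
  assumes wf: "wf_vdiag D" and has_crossings: "0 < nc D"
begin

abbreviation "N \<equiv> npass D"

lemma npass_eq: "N = 2 * nc D"
  by (simp add: npass_def)

lemma npass_pos: "0 < N"
  using has_crossings npass_eq by simp

lemma cr_less: "t < N \<Longrightarrow> cr D t < nc D"
  using wf unfolding wf_vdiag_def by blast

lemma card_passages: "k < nc D \<Longrightarrow> card {t. t < N \<and> cr D t = k} = 2"
  using wf unfolding wf_vdiag_def by blast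

lemma passages_opposite:
  "t < N \<Longrightarrow> s < N \<Longrightarrow> t \<noteq> s \<Longrightarrow> cr D t = cr D s \<Longrightarrow>
    lr D s = (\<not> lr D t) \<and> (\<not> virt D (cr D t) \<longrightarrow> ovr D s = (\<not> ovr D t))"
  using wf unfolding wf_vdiag_def by blast

lemma num_faces_eq: "num_faces D = nc D + 2"
  using wf has_crossings unfolding wf_vdiag_def planar_def by auto

lemma partner_ex1:
  assumes "t < N" shows "\<exists>!s. s < N \<and> s \<noteq> t \<and> cr D s = cr D t"
proof -
  have "card {s. s < N \<and> cr D s = cr D t} = 2" using card_passages cr_less assms by blast
  then obtain x y where xy: "{s. s < N \<and> cr D s = cr D t} = {x, y}" "x \<noteq> y"
    by (auto simp: card_2_iff)
  have "t \<in> {x, y}" using xy(1) assms by blast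
  have mem: "s \<in> {x, y} \<longleftrightarrow> s < N \<and> cr D s = cr D t" for s using xy(1) by blast
  show ?thesis
  proof (cases "t = x")
    case True
    show ?thesis
    proof (rule ex1I[of _ y])
      show "y < N \<and> y \<noteq> t \<and> cr D y = cr D t" using mem[of y] True xy(2) by simp
      show "s = y" if "s < N \<and> s \<noteq> t \<and> cr D s = cr D t" for s using mem[of s] that True by blast
    qed
  next
    case False
    then have tx: "t = y" using \<open>t \<in> {x, y}\<close> by blast
    show ?thesis
    proof (rule ex1I[of _ x])
      show "x < N \<and> x \<noteq> t \<and> cr D x = cr D t" using mem[of x] tx xy(2) by simp
      show "s = x" if "s < N \<and> s \<noteq> t \<and> cr D s = cr D t" for s using mem[of s] that tx by blast
    qed
  qed
qed

lemma partner_spec: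
  assumes "t < N"
  shows "partner D t < N" "partner D t \<noteq> t" "cr D (partner D t) = cr D t"
proof -
  have "partner D t < N \<and> partner D t \<noteq> t \<and> cr D (partner D t) = cr D t"
    unfolding partner_def using theI'[OF partner_ex1[OF assms]] by simp
  then show "partner D t < N" "partner D t \<noteq> t" "cr D (partner D t) = cr D t" by auto
qed

lemma partner_unique:
  assumes "t < N" "s < N" "s \<noteq> t" "cr D s = cr D t" shows "s = partner D t"
  using partner_ex1[OF assms(1)] partner_spec[OF assms(1)] assms by blast

lemma partner_partner: "t < N \<Longrightarrow> partner D (partner D t) = t"
  using partner_unique[of "partner D t" t] partner_spec[of t] by metis

lemma lr_partner: "t < N \<Longrightarrow> lr D (partner D t) = (\<not> lr D t)"
  using passages_opposite[of t "partner D t"] partner_spec[of t] by metis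

lemma ovr_partner: "t < N \<Longrightarrow> \<not> virt D (cr D t) \<Longrightarrow> ovr D (partner D t) = (\<not> ovr D t)"
  using passages_opposite[of t "partner D t"] partner_spec[of t] by metis

lemma bij_betw_partner: "bij_betw (partner D) {..<N} {..<N}"
  by (rule bij_betw_byWitness[where f' = "partner D"]) (auto simp: partner_partner partner_spec)

definition prev_pass :: "nat \<Rightarrow> nat" where
  "prev_pass t = (t + N - 1) mod N"

text \<open>Edge \<open>e\<close> of the diagram runs from passage \<open>e\<close> to passage \<open>Suc e mod N\<close>; the half-edge
  \<open>(t, True)\<close> leaves passage \<open>t\<close> along edge \<open>t\<close> and \<open>(t, False)\<close> arrives at passage \<open>t\<close> along edge
  \<open>prev_pass t\<close>. Then \<open>face_perm m\<close> is the face permutation of the ribbon graph formed by the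
  crossings and the edges \<open>0, \<dots>, m - 1\<close> only: \<open>face_perm 0 = next_ccw D\<close> has one orbit per crossing,
  and \<open>face_perm N\<close> is conjugate to \<open>face_step D\<close>.\<close>

definition edge_mate :: "nat \<times> bool \<Rightarrow> nat \<times> bool" where
  "edge_mate x = (if snd x then (Suc (fst x) mod N, False) else (prev_pass (fst x), True))"

definition edge_of :: "nat \<times> bool \<Rightarrow> nat" where
  "edge_of x = (if snd x then fst x else prev_pass (fst x))"

definition edge_mate_below :: "nat \<Rightarrow> nat \<times> bool \<Rightarrow> nat \<times> bool" where
  "edge_mate_below m x = (if x \<in> darts D \<and> edge_of x < m then edge_mate x else x)"

definition face_perm :: "nat \<Rightarrow> nat \<times> bool \<Rightarrow> nat \<times> bool" where
  "face_perm m = next_ccw D \<circ> edge_mate_below m"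

definition faces_below :: "nat \<Rightarrow> nat" where
  "faces_below m = card (orbit_in (face_perm m) (darts D) ` darts D)"

definition edge_start :: "nat \<Rightarrow> nat \<times> bool" where
  "edge_start m = (m, True)"

definition edge_end :: "nat \<Rightarrow> nat \<times> bool" where
  "edge_end m = (Suc m mod N, False)"

lemma next_ccw_simp: "next_ccw D (t, f) = (partner D t, if lr D t then \<not> f else f)"
  by (simp add: next_ccw_def)

lemma prev_pass_eq: "t < N \<Longrightarrow> prev_pass t = (if t = 0 then N - 1 else t - 1)"
  unfolding prev_pass_def by (rule pred_mod_cases)

lemma prev_pass_less: "t < N \<Longrightarrow> prev_pass t < N"
  using prev_pass_eq npass_pos by auto

lemma Suc_prev_pass: "t < N \<Longrightarrow> Suc (prev_pass t) mod N = t"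
  using prev_pass_eq[of t] npass_pos by (cases "t = 0") auto

lemma prev_pass_Suc: "t < N \<Longrightarrow> prev_pass (Suc t mod N) = t"
  using prev_pass_eq[of "Suc t mod N"] npass_pos by (cases "Suc t = N") (auto simp: mod_Suc)

lemma mem_darts: "x \<in> darts D \<longleftrightarrow> fst x < N"
  by (cases x) (simp add: darts_def)

lemma finite_darts: "finite (darts D)"
  by (simp add: darts_def)

lemma next_ccw_in_darts: "x \<in> darts D \<Longrightarrow> next_ccw D x \<in> darts D"
  by (cases x) (simp add: mem_darts next_ccw_simp partner_spec)

lemma inj_on_next_ccw: "inj_on (next_ccw D) (darts D)"
proof (rule inj_onI)
  fix x y assume "x \<in> darts D" "y \<in> darts D" "next_ccw D x = next_ccw D y"
  then show "x = y"
    by (cases x, cases y) (simp add: mem_darts next_ccw_simp split: if_splits; metis partner_partner)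
qed

lemma edge_mate_in_darts: "x \<in> darts D \<Longrightarrow> edge_mate x \<in> darts D"
  by (cases x) (auto simp: mem_darts edge_mate_def prev_pass_less npass_pos)

lemma edge_mate_edge_mate: "x \<in> darts D \<Longrightarrow> edge_mate (edge_mate x) = x"
  by (cases x) (auto simp: mem_darts edge_mate_def Suc_prev_pass prev_pass_Suc npass_pos)

lemma edge_of_edge_mate: "x \<in> darts D \<Longrightarrow> edge_of (edge_mate x) = edge_of x"
  by (cases x) (auto simp: mem_darts edge_mate_def edge_of_def Suc_prev_pass prev_pass_Suc npass_pos)

lemma edge_of_less: "x \<in> darts D \<Longrightarrow> edge_of x < N"
  by (cases x) (auto simp: mem_darts edge_of_def prev_pass_less)

lemma edge_mate_below_in_darts: "x \<in> darts D \<Longrightarrow> edge_mate_below m x \<in> darts D"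
  by (simp add: edge_mate_below_def edge_mate_in_darts)

lemma edge_mate_below_involution: "x \<in> darts D \<Longrightarrow> edge_mate_below m (edge_mate_below m x) = x"
  by (simp add: edge_mate_below_def edge_mate_in_darts edge_mate_edge_mate edge_of_edge_mate)

lemma edge_mate_below_npass: "x \<in> darts D \<Longrightarrow> edge_mate_below N x = edge_mate x"
  by (simp add: edge_mate_below_def edge_of_less)

lemma face_perm_0: "face_perm 0 = next_ccw D"
  by (rule ext) (simp add: face_perm_def edge_mate_below_def)

lemma permutation_on_face_perm: "permutation_on (face_perm m) (darts D)"
proof
  show "finite (darts D)" by (rule finite_darts)
  show "face_perm m x \<in> darts D" if "x \<in> darts D" for x
    using that by (simp add: face_perm_def edge_mate_below_in_darts next_ccw_in_darts)
  show "inj_on (face_perm m) (darts D)"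
  proof (rule inj_onI)
    fix x y assume xy: "x \<in> darts D" "y \<in> darts D" "face_perm m x = face_perm m y"
    then have "edge_mate_below m x = edge_mate_below m y"
      using inj_on_next_ccw edge_mate_below_in_darts unfolding face_perm_def inj_on_def by simp
    then show "x = y"
      using edge_mate_below_involution xy by metis
  qed
qed

lemma edge_ends:
  assumes "m < N" shows "edge_start m \<in> darts D" "edge_end m \<in> darts D" "edge_start m \<noteq> edge_end m"
  using assms by (auto simp: edge_start_def edge_end_def mem_darts npass_pos)

lemma edge_of_eq_iff:
  assumes "x \<in> darts D" "m < N" shows "edge_of x = m \<longleftrightarrow> x = edge_start m \<or> x = edge_end m"
  using assms Suc_prev_pass prev_pass_Suc
  by (cases x) (auto simp: edge_of_def edge_start_def edge_end_def mem_darts)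

lemma face_perm_Suc:
  assumes "m < N"
  shows "face_perm (Suc m) = face_perm m \<circ> Transposition.transpose (edge_start m) (edge_end m)"
proof (rule ext)
  fix x
  have mate: "edge_mate (edge_start m) = edge_end m" "edge_mate (edge_end m) = edge_start m"
    using assms edge_mate_edge_mate[OF edge_ends(1)[OF assms]]
    by (simp_all add: edge_mate_def edge_start_def edge_end_def)
  have "edge_mate_below (Suc m) x = edge_mate_below m (Transposition.transpose (edge_start m) (edge_end m) x)"
  proof (cases "x \<in> darts D \<and> edge_of x = m")
    case True
    then show ?thesis
      using mate edge_of_eq_iff[of x m] edge_of_eq_iff[of "edge_start m" m]
        edge_of_eq_iff[of "edge_end m" m] assms edge_ends[OF assms]
      by (auto simp: edge_mate_below_def)
  next
    case False
    then have "x \<noteq> edge_start m" "x \<noteq> edge_end m"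
      using edge_of_eq_iff[of x m] assms edge_ends[OF assms] by auto
    with False show ?thesis
      by (auto simp: edge_mate_below_def)
  qed
  then show "face_perm (Suc m) x = (face_perm m \<circ> Transposition.transpose (edge_start m) (edge_end m)) x"
    by (simp add: face_perm_def)
qed

lemma permutation_on_transpose_face_perm:
  "m < N \<Longrightarrow> permutation_on_transpose (face_perm m) (darts D) (edge_start m) (edge_end m)"
  using permutation_on_face_perm edge_ends
  by (simp add: permutation_on_transpose_def permutation_on_transpose_axioms_def)

lemma leave_eq: "leave D (t, b) = (if b then (t, True) else (prev_pass t, False))"
  by (simp add: leave_def prev_pass_def)

lemma bij_betw_leave: "bij_betw (leave D) (darts D) (darts D)"
proof -
  have "leave D ` darts D \<subseteq> darts D"
    by (auto simp: leave_def mem_darts prev_pass_less[unfolded prev_pass_def])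
  moreover have "inj_on (leave D) (darts D)"
  proof (rule inj_onI)
    fix x y assume "x \<in> darts D" "y \<in> darts D" "leave D x = leave D y"
    then show "x = y"
      by (cases x, cases y) (auto simp: leave_eq mem_darts split: if_splits; metis Suc_prev_pass)
  qed
  ultimately show ?thesis
    using endo_inj_surj[OF finite_darts] by (simp add: bij_betw_def)
qed

lemma face_step_leave: "x \<in> darts D \<Longrightarrow> face_step D (leave D x) = leave D (face_perm N x)"
  by (cases x) (auto simp: face_step_def face_perm_def edge_mate_below_npass leave_eq arrive_def
      edge_mate_def mem_darts Suc_prev_pass)

lemma faces_below_npass: "faces_below N = nc D + 2"
proof -
  have "num_faces D = card (orbit_in (face_step D) (darts D) ` darts D)"
    unfolding num_faces_def orbit_in_def by simp
  also have "\<dots> = faces_below N"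
    unfolding faces_below_def
    by (rule card_orbits_conj[where h = "leave D"])
      (simp_all add: bij_betw_leave face_step_leave permutation_on.maps_to[OF permutation_on_face_perm])
  finally show ?thesis
    using num_faces_eq by simp
qed

lemma orbit_next_ccw_crossing:
  assumes x: "x \<in> darts D" and y: "y \<in> darts D" and c: "cr D (fst y) = cr D (fst x)"
  shows "y \<in> orbit_in (next_ccw D) (darts D) x"
proof -
  let ?O = "orbit_in (next_ccw D) (darts D)"
  obtain t f where xt: "x = (t, f)" by (cases x)
  have t: "t < N" using x xt mem_darts by simp
  define f' where "f' = (if lr D t then \<not> f else f)"
  have s1: "next_ccw D (t, f) = (partner D t, f')"
    by (simp add: next_ccw_simp f'_def)
  have s2: "next_ccw D (partner D t, f') = (t, \<not> f)"
    using lr_partner[OF t] partner_partner[OF t] by (simp add: next_ccw_simp f'_def)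
  have s3: "next_ccw D (t, \<not> f) = (partner D t, \<not> f')"
    by (simp add: next_ccw_simp f'_def)
  have in_darts: "(partner D t, f') \<in> darts D" "(t, \<not> f) \<in> darts D"
    using t partner_spec(1)[OF t] by (auto simp: mem_darts)
  have m0: "(t, f) \<in> ?O x" using orbit_in_self[of x] xt by simp
  have m1: "(partner D t, f') \<in> ?O x" using orbit_in_step[OF m0] x xt s1 by simp
  have m2: "(t, \<not> f) \<in> ?O x" using orbit_in_step[OF m1 in_darts(1)] s2 by simp
  have m3: "(partner D t, \<not> f') \<in> ?O x" using orbit_in_step[OF m2 in_darts(2)] s3 by simp
  obtain t' g where yt: "y = (t', g)" by (cases y)
  have "t' = t \<or> t' = partner D t"
    using partner_unique[OF t] y c xt yt mem_darts by auto
  then show ?thesis using m0 m1 m2 m3 yt by (cases g; cases f'; cases f) auto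
qed

lemma faces_below_0_le: "faces_below 0 \<le> nc D"
proof -
  interpret P: permutation_on "next_ccw D" "darts D"
    using permutation_on_face_perm[of 0] by (simp add: face_perm_0)
  let ?O = "orbit_in (next_ccw D) (darts D)"
  define F where "F k = ?O (SOME x. x \<in> darts D \<and> cr D (fst x) = k)" for k
  have "?O x = F (cr D (fst x))" if x: "x \<in> darts D" for x
  proof -
    have "\<exists>y. y \<in> darts D \<and> cr D (fst y) = cr D (fst x)" using x by blast
    then have "(SOME y. y \<in> darts D \<and> cr D (fst y) = cr D (fst x)) \<in> darts D \<and>
        cr D (fst (SOME y. y \<in> darts D \<and> cr D (fst y) = cr D (fst x))) = cr D (fst x)"
      by (rule someI_ex)
    then show ?thesis unfolding F_def using P.orbit_in_eq[OF x orbit_next_ccw_crossing[OF x]] by metis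
  qed
  then have "?O ` darts D \<subseteq> F ` {..<nc D}"
    using cr_less mem_darts by auto
  then have "card (?O ` darts D) \<le> card (F ` {..<nc D})"
    by (rule card_mono[rotated]) simp
  also have "\<dots> \<le> nc D"
    using card_image_le[of "{..<nc D}" F] by simp
  finally show ?thesis unfolding faces_below_def face_perm_0 .
qed

lemma faces_below_Suc:
  assumes "m < N"
  shows "faces_below (Suc m) + (if edge_end m \<in> orbit_in (face_perm m) (darts D) (edge_start m) then 1 else 2) =
         faces_below m + (if edge_end m \<in> orbit_in (face_perm (Suc m)) (darts D) (edge_start m) then 1 else 2)"
proof -
  interpret S: permutation_on_transpose "face_perm m" "darts D" "edge_start m" "edge_end m"
    by (rule permutation_on_transpose_face_perm[OF assms])
  show ?thesis
    using S.card_orbits_transpose unfolding faces_below_def face_perm_Suc[OF assms] .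
qed

lemma faces_below_Suc_le: "m < N \<Longrightarrow> faces_below (Suc m) \<le> faces_below m + 1"
  using faces_below_Suc[of m] by (simp split: if_splits)

lemma faces_below_Suc_eq:
  assumes "m < N" "faces_below (Suc m) = faces_below m + 1"
  shows "edge_end m \<in> orbit_in (face_perm m) (darts D) (edge_start m)"
    and "edge_end m \<notin> orbit_in (face_perm (Suc m)) (darts D) (edge_start m)"
  using faces_below_Suc[OF assms(1)] assms(2) by (simp_all split: if_splits)

text \<open>The tree edges form a spanning tree of the underlying graph of the diagram.\<close>

definition tree_edge :: "nat \<Rightarrow> bool" where
  "tree_edge m \<longleftrightarrow> Suc m < N \<and> (\<forall>t \<le> m. cr D t \<noteq> cr D (Suc m))"

lemma tree_edge_far:
  assumes "tree_edge m" "y \<in> darts D" "cr D (fst y) = cr D (Suc m)"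
  shows "m < fst y" "\<not> edge_of y < m"
proof -
  obtain t f where y: "y = (t, f)" by (cases y)
  have "t < N" using assms y mem_darts by simp
  then show "m < fst y" using assms y by (auto simp: tree_edge_def not_le)
  then show "\<not> edge_of y < m" using y \<open>t < N\<close> by (auto simp: edge_of_def prev_pass_eq)
qed

lemma tree_edge_separates:
  assumes A: "tree_edge m" shows "edge_end m \<notin> orbit_in (face_perm m) (darts D) (edge_start m)"
proof
  assume h: "edge_end m \<in> orbit_in (face_perm m) (darts D) (edge_start m)"
  interpret P: permutation_on "face_perm m" "darts D" by (rule permutation_on_face_perm)
  have m: "m < N" "Suc m < N" using A by (auto simp: tree_edge_def)
  let ?V = "{x \<in> darts D. cr D (fst x) = cr D (Suc m)}"
  have "edge_start m \<in> ?V"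
  proof (rule orbit_in_closed)
    show "edge_start m \<in> orbit_in (face_perm m) (darts D) (edge_end m)"
      using P.orbit_in_sym[OF edge_ends(1)[OF m(1)] h] .
    show "edge_end m \<in> ?V" using m by (simp add: edge_end_def mem_darts)
    show "face_perm m z \<in> ?V" if "z \<in> darts D" "z \<in> ?V" for z
    proof -
      have "face_perm m z = next_ccw D z"
        using tree_edge_far(2)[OF A] that by (simp add: face_perm_def edge_mate_below_def)
      then show ?thesis
        using that partner_spec by (cases z) (simp add: next_ccw_simp mem_darts)
    qed
  qed
  then show False
    using tree_edge_far(1)[OF A, of "edge_start m"] by (simp add: edge_start_def)
qed

lemma faces_below_Suc_tree_edge:
  assumes "tree_edge m" shows "faces_below (Suc m) + 1 = faces_below m"
proof -
  have m: "m < N" using assms by (simp add: tree_edge_def)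
  interpret S: permutation_on_transpose "face_perm m" "darts D" "edge_start m" "edge_end m"
    by (rule permutation_on_transpose_face_perm[OF m])
  have "edge_end m \<in> orbit_in (face_perm (Suc m)) (darts D) (edge_start m)"
    using S.orbit_in_transpose_merge tree_edge_separates[OF assms] face_perm_Suc[OF m] by simp
  then show ?thesis
    using faces_below_Suc[OF m] tree_edge_separates[OF assms] by simp
qed

text \<open>The edge into the first passage through each crossing other than that of passage \<open>0\<close> is a
  tree edge.\<close>

lemma card_tree_edges: "nc D - 1 \<le> card {m. m < N \<and> tree_edge m}"
proof -
  define first where "first k = (LEAST t. t < N \<and> cr D t = k)" for k
  have first: "first k < N \<and> cr D (first k) = k" if "k < nc D" for k
  proof -
    have "{t. t < N \<and> cr D t = k} \<noteq> {}"
      using card_passages[OF that] by (metis card.empty zero_neq_numeral)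
    then show ?thesis
      unfolding first_def by (metis (mono_tags, lifting) Collect_empty_eq LeastI_ex)
  qed
  have before_first: "\<not> (t < N \<and> cr D t = k)" if "t < first k" for t k
    using that unfolding first_def by (rule not_less_Least)
  let ?S = "{..<nc D} - {cr D 0}"
  have "card ?S = nc D - 1"
    using cr_less npass_pos by simp
  moreover have "card ?S \<le> card {m. m < N \<and> tree_edge m}"
  proof (rule card_inj_on_le)
    show "inj_on (\<lambda>k. first k - 1) ?S"
    proof (rule inj_onI)
      fix k k' assume kk: "k \<in> ?S" "k' \<in> ?S" "first k - 1 = first k' - 1"
      have "first k \<noteq> 0" "first k' \<noteq> 0" using first kk by (metis DiffE insertI1 lessThan_iff)+
      then have "first k = first k'" using kk(3) by simp
      then show "k = k'" using first kk by (metis DiffE lessThan_iff)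
    qed
    show "(\<lambda>k. first k - 1) ` ?S \<subseteq> {m. m < N \<and> tree_edge m}"
    proof
      fix m assume "m \<in> (\<lambda>k. first k - 1) ` ?S"
      then obtain k where k: "k < nc D" "k \<noteq> cr D 0" "m = first k - 1" by blast
      then have "first k \<noteq> 0" using first by metis
      then have "Suc m = first k" using k(3) by simp
      then show "m \<in> {m. m < N \<and> tree_edge m}"
        using first[OF k(1)] before_first[of _ k] by (auto simp: tree_edge_def)
    qed
  qed simp
  ultimately show ?thesis by simp
qed

text \<open>Every tree edge merges two faces and every other edge can at most split one; by Euler's
  formula in the guise of \<open>faces_below_npass\<close> every non-tree edge must actually split a face.\<close>

lemma faces_below_bound:
  assumes "m \<le> N"
  shows "faces_below m + 2 * card {x. x < m \<and> tree_edge x}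
    + card {x. x < m \<and> \<not> tree_edge x \<and> faces_below (Suc x) \<noteq> faces_below x + 1} \<le> faces_below 0 + m"
  using assms
proof (induction m)
  case (Suc m)
  then have "m < N" by simp
  with Suc show ?case
    using faces_below_Suc_tree_edge faces_below_Suc_le unfolding card_Collect_less_Suc
    by (cases "tree_edge m") fastforce+
qed simp

lemma non_tree_edge_splits_face:
  assumes "m < N" "\<not> tree_edge m"
  shows "edge_end m \<in> orbit_in (face_perm m) (darts D) (edge_start m)"
    and "edge_end m \<notin> orbit_in (face_perm (Suc m)) (darts D) (edge_start m)"
proof -
  have "card {x. x < N \<and> \<not> tree_edge x \<and> faces_below (Suc x) \<noteq> faces_below x + 1} = 0"
    using faces_below_bound[of N] faces_below_npass faces_below_0_le card_tree_edges npass_eq has_crossings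
    by linarith
  then have "faces_below (Suc m) = faces_below m + 1"
    using assms by auto
  then show "edge_end m \<in> orbit_in (face_perm m) (darts D) (edge_start m)"
    and "edge_end m \<notin> orbit_in (face_perm (Suc m)) (darts D) (edge_start m)"
    using faces_below_Suc_eq assms(1) by blast+
qed

section \<open>Cycles are face boundaries\<close>

text \<open>An integer 1-chain \<open>c\<close> on the edges \<open>0, \<dots>, m - 1\<close> is a cycle if its divergence vanishes at
  every crossing. A function \<open>W\<close> on half-edges that is invariant under \<open>face_perm m\<close> is a 2-chain on
  the faces, and \<open>face_boundary W e\<close> is the coefficient of edge \<open>e\<close> in its boundary. Planarity
  makes every cycle a boundary; this is proved by induction on \<open>m\<close>, following the face count.\<close>

definition darts_at :: "nat \<Rightarrow> (nat \<times> bool) set" where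
  "darts_at k = {x \<in> darts D. cr D (fst x) = k}"

definition orient :: "nat \<times> bool \<Rightarrow> int" where
  "orient x = (if snd x then 1 else -1)"

definition divergence :: "nat \<Rightarrow> (nat \<Rightarrow> int) \<Rightarrow> nat \<Rightarrow> int" where
  "divergence m c k = (\<Sum>x \<in> darts_at k. if edge_of x < m then orient x * c (edge_of x) else 0)"

definition is_cycle :: "nat \<Rightarrow> (nat \<Rightarrow> int) \<Rightarrow> bool" where
  "is_cycle m c \<longleftrightarrow> (\<forall>k < nc D. divergence m c k = 0)"

definition face_boundary :: "(nat \<times> bool \<Rightarrow> int) \<Rightarrow> nat \<Rightarrow> int" where
  "face_boundary W e = W (e, True) - W (Suc e mod N, False)"

definition is_face_boundary :: "nat \<Rightarrow> (nat \<Rightarrow> int) \<Rightarrow> bool" where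
  "is_face_boundary m c \<longleftrightarrow>
     (\<exists>W. (\<forall>x \<in> darts D. W (face_perm m x) = W x) \<and> (\<forall>e < m. c e = face_boundary W e))"

lemma finite_darts_at: "finite (darts_at k)"
  using finite_darts by (simp add: darts_at_def)

lemma inj_on_next_ccw_darts_at: "inj_on (next_ccw D) (darts_at k)"
  using inj_on_next_ccw by (rule inj_on_subset) (auto simp: darts_at_def)

lemma next_ccw_darts_at: "next_ccw D ` darts_at k = darts_at k"
proof -
  have "next_ccw D ` darts_at k \<subseteq> darts_at k"
    using next_ccw_in_darts by (auto simp: darts_at_def next_ccw_simp mem_darts partner_spec)
  then show ?thesis
    using endo_inj_surj[OF finite_darts_at _ inj_on_next_ccw_darts_at] by blast
qed

lemma face_boundary_is_cycle:
  assumes inv: "\<And>x. x \<in> darts D \<Longrightarrow> W (face_perm m x) = W x"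
  shows "is_cycle m (face_boundary W)"
  unfolding is_cycle_def
proof (intro allI impI)
  fix k
  have term_eq: "(if edge_of x < m then orient x * face_boundary W (edge_of x) else 0) = W x - W (next_ccw D x)"
    if x: "x \<in> darts_at k" for x
  proof -
    have xH: "x \<in> darts D" using x by (simp add: darts_at_def)
    have "W (edge_mate_below m x) = W (next_ccw D x)"
      using inv[OF edge_mate_below_in_darts[of x m, OF xH]] edge_mate_below_involution[of x m, OF xH]
      by (simp add: face_perm_def)
    moreover have "(if edge_of x < m then orient x * face_boundary W (edge_of x) else 0) =
        W x - W (edge_mate_below m x)"
      using xH by (cases x) (auto simp: edge_mate_below_def edge_of_def orient_def face_boundary_def
          edge_mate_def mem_darts Suc_prev_pass)
    ultimately show ?thesis by simp
  qed
  have "divergence m (face_boundary W) k = (\<Sum>x \<in> darts_at k. W x - W (next_ccw D x))"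
    unfolding divergence_def using term_eq by (rule sum.cong[OF refl])
  also have "\<dots> = sum W (darts_at k) - sum W (next_ccw D ` darts_at k)"
    using inj_on_next_ccw_darts_at by (simp add: sum_subtractf sum.reindex)
  finally show "divergence m (face_boundary W) k = 0"
    using next_ccw_darts_at by simp
qed

lemma divergence_diff:
  "divergence m (\<lambda>e. c e - a * b e) k = divergence m c k - a * divergence m b k"
  unfolding divergence_def sum_distrib_left sum_subtractf[symmetric]
  by (rule sum.cong) (auto simp: algebra_simps)

lemma divergence_Suc: "c m = 0 \<Longrightarrow> divergence (Suc m) c k = divergence m c k"
  unfolding divergence_def by (rule sum.cong) (auto simp: less_Suc_eq)

lemma divergence_tree_edge:
  assumes A: "tree_edge m" shows "divergence (Suc m) c (cr D (Suc m)) = - c m"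
proof -
  have sm: "Suc m < N" using A by (simp add: tree_edge_def)
  have edge_end: "edge_end m = (Suc m, False)" using sm by (simp add: edge_end_def)
  have term_eq: "(if edge_of x < Suc m then orient x * c (edge_of x) else 0) = (if x = edge_end m then - c m else 0)"
    if x: "x \<in> darts_at (cr D (Suc m))" for x
  proof -
    obtain t f where xt: "x = (t, f)" by (cases x)
    have xH: "x \<in> darts D" "cr D (fst x) = cr D (Suc m)" using x by (auto simp: darts_at_def)
    have t: "m < t" "t < N" using tree_edge_far(1)[OF A xH] xt xH mem_darts by auto
    then show ?thesis
      using xt edge_end by (cases f) (auto simp: edge_of_def prev_pass_eq orient_def)
  qed
  have "edge_end m \<in> darts_at (cr D (Suc m))"
    using edge_end sm by (simp add: darts_at_def mem_darts)
  moreover have "divergence (Suc m) c (cr D (Suc m)) =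
      (\<Sum>x \<in> darts_at (cr D (Suc m)). if x = edge_end m then - c m else 0)"
    unfolding divergence_def by (rule sum.cong[OF refl term_eq])
  ultimately show ?thesis
    using finite_darts_at by (simp add: sum.delta)
qed

lemma cr_face_perm_tree_edge:
  assumes A: "tree_edge m" "z \<in> darts D"
  shows "cr D (fst (face_perm m z)) = cr D (Suc m) \<longleftrightarrow> cr D (fst z) = cr D (Suc m)"
proof -
  have "cr D (fst (next_ccw D y)) = cr D (fst y)" if "y \<in> darts D" for y
    using that by (cases y) (simp add: next_ccw_simp partner_spec mem_darts)
  then have e: "cr D (fst (face_perm m z)) = cr D (fst (edge_mate_below m z))"
    using edge_mate_below_in_darts[OF A(2)] by (simp add: face_perm_def)
  show ?thesis
  proof (cases "edge_of z < m")
    case False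
    then show ?thesis using e by (simp add: edge_mate_below_def)
  next
    case True
    then have z: "edge_mate_below m z = edge_mate z" using A(2) by (simp add: edge_mate_below_def)
    have "cr D (fst z) \<noteq> cr D (Suc m)" using tree_edge_far(2)[OF A] True by blast
    moreover have "cr D (fst (edge_mate z)) \<noteq> cr D (Suc m)"
      using tree_edge_far(2)[OF A(1) edge_mate_in_darts[OF A(2)]] True edge_of_edge_mate[OF A(2)] by auto
    ultimately show ?thesis using e z by simp
  qed
qed

lemma face_perm_Suc_apply:
  "m < N \<Longrightarrow> face_perm (Suc m) x =
     (if x = edge_start m then face_perm m (edge_end m)
      else if x = edge_end m then face_perm m (edge_start m) else face_perm m x)"
  by (simp add: face_perm_Suc transpose_def)

text \<open>Across a tree edge the new face function is constant on the half-edges at the new crossing,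
  so that its boundary vanishes there.\<close>

lemma is_face_boundary_Suc_tree_edge:
  assumes A: "tree_edge m" and cyc: "is_cycle (Suc m) c"
    and IH: "is_cycle m c \<Longrightarrow> is_face_boundary m c"
  shows "is_face_boundary (Suc m) c"
proof -
  define k where "k = cr D (Suc m)"
  have sm: "Suc m < N" and m: "m < N" using A by (auto simp: tree_edge_def)
  then have "divergence (Suc m) c k = 0"
    using cyc cr_less by (simp add: is_cycle_def k_def)
  then have cm: "c m = 0" using divergence_tree_edge[OF A] k_def by simp
  then have "is_cycle m c" using cyc divergence_Suc by (simp add: is_cycle_def)
  then obtain W where W: "\<forall>x \<in> darts D. W (face_perm m x) = W x" "\<forall>e < m. c e = face_boundary W e"
    using IH by (auto simp: is_face_boundary_def)
  define W' where "W' x = (if cr D (fst x) = k then W (edge_start m) else W x)" for x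
  have start_k: "cr D (fst (edge_start m)) \<noteq> k" using A by (simp add: tree_edge_def edge_start_def k_def)
  have end_k: "cr D (fst (edge_end m)) = k" using sm by (simp add: edge_end_def k_def)
  have same_k: "cr D (fst (face_perm m z)) = k \<longleftrightarrow> cr D (fst z) = k" if "z \<in> darts D" for z
    using cr_face_perm_tree_edge[OF A that] k_def by simp
  have "W' (face_perm (Suc m) x) = W' x" if x: "x \<in> darts D" for x
    using face_perm_Suc_apply[OF m, of x] same_k[OF x] same_k[OF edge_ends(1)[OF m]]
      same_k[OF edge_ends(2)[OF m]] start_k end_k W(1) x edge_ends[OF m]
    by (auto simp: W'_def)
  moreover have "c e = face_boundary W' e" if "e < Suc m" for e
  proof (cases "e < m")
    case True
    then have "cr D e \<noteq> k" "cr D (Suc e) \<noteq> k" using A by (auto simp: tree_edge_def k_def)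
    then show ?thesis using W(2) True m by (simp add: face_boundary_def W'_def)
  next
    case False
    then have "e = m" using that by simp
    then show ?thesis
      using start_k end_k cm by (simp add: face_boundary_def W'_def edge_start_def edge_end_def)
  qed
  ultimately show ?thesis
    unfolding is_face_boundary_def by blast
qed

text \<open>Across a non-tree edge, which splits a face, subtract \<open>c m\<close> times the boundary of one of the two
  new faces and extend the face function given by induction.\<close>

lemma is_face_boundary_Suc_non_tree_edge:
  assumes m: "m < N" and nA: "\<not> tree_edge m" and cyc: "is_cycle (Suc m) c"
    and IH: "\<And>c. is_cycle m c \<Longrightarrow> is_face_boundary m c"
  shows "is_face_boundary (Suc m) c"
proof -
  interpret PS: permutation_on "face_perm (Suc m)" "darts D" by (rule permutation_on_face_perm)
  note split = non_tree_edge_splits_face[OF m nA]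
  define F where "F = orbit_in (face_perm (Suc m)) (darts D) (edge_start m)"
  define \<chi> where "\<chi> x = (if x \<in> F then 1 else (0::int))" for x
  have \<chi>_inv: "\<chi> (face_perm (Suc m) x) = \<chi> x" if "x \<in> darts D" for x
    using PS.orbit_in_step_iff[OF that] by (simp add: \<chi>_def F_def)
  have \<chi>_m: "face_boundary \<chi> m = 1"
    using split(2) orbit_in_self[of "edge_start m"]
    by (simp add: \<chi>_def F_def face_boundary_def edge_start_def edge_end_def)
  define c' where "c' e = c e - c m * face_boundary \<chi> e" for e
  have "is_cycle (Suc m) c'"
    using cyc face_boundary_is_cycle[where W = \<chi> and m = "Suc m", OF \<chi>_inv] divergence_diff
    unfolding is_cycle_def c'_def by simp
  moreover have "c' m = 0" using \<chi>_m by (simp add: c'_def)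
  ultimately have "is_cycle m c'" using divergence_Suc by (simp add: is_cycle_def)
  then obtain W where W: "\<forall>x \<in> darts D. W (face_perm m x) = W x" "\<forall>e < m. c' e = face_boundary W e"
    using IH unfolding is_face_boundary_def by blast
  have W_ends: "W (edge_end m) = W (edge_start m)"
    using orbit_in_invariant[OF split(1)] W(1) by blast
  have W_inv: "W (face_perm (Suc m) x) = W x" if x: "x \<in> darts D" for x
    using face_perm_Suc_apply[OF m, of x] W(1) x edge_ends[OF m] W_ends by auto
  define W' where "W' x = W x + c m * \<chi> x" for x
  have "W' (face_perm (Suc m) x) = W' x" if "x \<in> darts D" for x
    using W_inv[OF that] \<chi>_inv[OF that] by (simp add: W'_def)
  moreover have "c e = face_boundary W' e" if "e < Suc m" for e
  proof (cases "e < m")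
    case True
    then show ?thesis using W(2) by (simp add: face_boundary_def W'_def c'_def algebra_simps)
  next
    case False
    then have "e = m" using that by simp
    moreover have "face_boundary W m = 0"
      using W_ends by (simp add: face_boundary_def edge_start_def edge_end_def)
    ultimately show ?thesis
      using \<chi>_m by (simp add: face_boundary_def W'_def algebra_simps)
  qed
  ultimately show ?thesis
    unfolding is_face_boundary_def by blast
qed

lemma cycle_is_face_boundary: "m \<le> N \<Longrightarrow> is_cycle m c \<Longrightarrow> is_face_boundary m c"
proof (induction m arbitrary: c)
  case 0
  show ?case
    unfolding is_face_boundary_def by (rule exI[of _ "\<lambda>_. 0"]) simp
next
  case (Suc m)
  then show ?case
    using is_face_boundary_Suc_tree_edge[of m c] is_face_boundary_Suc_non_tree_edge[of m c]
    by (cases "tree_edge m") auto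
qed

section \<open>The index as a shift difference\<close>

lemma on_path_iff:
  assumes "s < N" "a < N" "u < N" "a \<noteq> u"
  shows "on_path D a u s \<longleftrightarrow> s \<noteq> a \<and> (if a < u then a < s \<and> s < u else a < s \<or> s < u)"
  using assms unfolding on_path_def by (auto simp: add_diff_mod_cases split: if_splits)

lemma on_path_prev_pass:
  assumes "t < N" "a < N" "u < N" "a \<noteq> u"
  shows "on_path D a u (prev_pass t) \<or> prev_pass t = a \<longleftrightarrow> on_path D a u t \<or> t = u"
  using on_path_iff[OF prev_pass_less[OF assms(1)] assms(2-4)] on_path_iff[OF assms]
    prev_pass_eq[OF assms(1)] assms npass_pos
  by (auto split: if_splits)

lemma sum_on_path:
  fixes g :: "nat \<Rightarrow> int"
  assumes "a < N" "u < N" "a \<noteq> u" "(\<Sum>s<N. g s) = 0"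
  shows "(\<Sum>s<N. if on_path D a u s then g s else 0) = (\<Sum>s<u. g s) - (\<Sum>s<a. g s) - g a"
proof -
  have "(\<Sum>s<N. if on_path D a u s then g s else 0) =
    (\<Sum>s<N. (if s < u then g s else 0) - (if s < a then g s else 0) + (if u < a then g s else 0)
       - (if s = a then g s else 0))"
    using on_path_iff[OF _ assms(1-3)] assms(3) by (intro sum.cong) auto
  also have "\<dots> = (\<Sum>s<u. g s) - (\<Sum>s<a. g s) - g a"
    using assms by (cases "u < a") (simp_all add: sum.distrib sum_subtractf sum_lessThan_if_less)
  finally show ?thesis .
qed

text \<open>The loop of the diagram that starts and ends at the crossing of passage \<open>a\<close>, as a 1-chain.\<close>

definition loop_chain :: "nat \<Rightarrow> nat \<Rightarrow> int" where
  "loop_chain a e = (if on_path D a (partner D a) e \<or> e = a then 1 else 0)"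

lemma is_cycle_loop_chain:
  assumes a: "a < N" shows "is_cycle N (loop_chain a)"
  unfolding is_cycle_def
proof (intro allI impI)
  fix k
  let ?u = "partner D a"
  have u: "?u < N" "a \<noteq> ?u" using partner_spec[OF a] by auto
  define P where "P = {t. t < N \<and> cr D t = k}"
  have "darts_at k = P \<times> UNIV"
    by (auto simp: darts_at_def P_def mem_darts)
  then have "divergence N (loop_chain a) k =
      (\<Sum>x \<in> P \<times> UNIV. if edge_of x < N then orient x * loop_chain a (edge_of x) else 0)"
    by (simp add: divergence_def)
  also have "\<dots> =
      (\<Sum>t \<in> P. \<Sum>b \<in> UNIV. if edge_of (t, b) < N then orient (t, b) * loop_chain a (edge_of (t, b)) else 0)"
    by (rule sum.cartesian_product')
  also have "\<dots> = (\<Sum>t \<in> P. (if t = a then 1 else 0) - (if t = ?u then 1 else 0))"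
  proof (rule sum.cong[OF refl])
    fix t assume "t \<in> P"
    then have t: "t < N" by (simp add: P_def)
    have "\<not> on_path D a ?u a" "\<not> on_path D a ?u ?u"
      by (simp_all add: on_path_def)
    then show "(\<Sum>b \<in> UNIV. if edge_of (t, b) < N then orient (t, b) * loop_chain a (edge_of (t, b)) else 0) =
        (if t = a then 1 else 0) - (if t = ?u then 1 else 0)"
      using t prev_pass_less[OF t] on_path_prev_pass[OF t a u]
      by (auto simp: UNIV_bool edge_of_def orient_def loop_chain_def)
  qed
  also have "\<dots> = 0"
  proof -
    have "a \<in> P \<longleftrightarrow> ?u \<in> P" using partner_spec[OF a] a by (simp add: P_def)
    then show ?thesis by (simp add: P_def sum_subtractf sum.delta)
  qed
  finally show "divergence N (loop_chain a) k = 0" .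
qed

lemma sum_face_jump:
  assumes "\<forall>e < N. c e = face_boundary W e"
  shows "(\<Sum>t<N. W (t, True) - W (t, False)) = (\<Sum>e<N. c e)"
proof -
  have "bij_betw (\<lambda>t. Suc t mod N) {..<N} {..<N}"
  proof (rule bij_betw_imageI)
    show "inj_on (\<lambda>t. Suc t mod N) {..<N}"
      by (rule inj_onI) (metis lessThan_iff prev_pass_Suc)
    show "(\<lambda>t. Suc t mod N) ` {..<N} = {..<N}"
    proof
      show "(\<lambda>t. Suc t mod N) ` {..<N} \<subseteq> {..<N}"
        using npass_pos by auto
      show "{..<N} \<subseteq> (\<lambda>t. Suc t mod N) ` {..<N}"
      proof
        fix t assume "t \<in> {..<N}"
        then have "t = Suc (prev_pass t) mod N" "prev_pass t \<in> {..<N}"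
          using Suc_prev_pass prev_pass_less by auto
        then show "t \<in> (\<lambda>t. Suc t mod N) ` {..<N}"
          by (rule image_eqI)
      qed
    qed
  qed
  then have "(\<Sum>t<N. W (Suc t mod N, False)) = (\<Sum>t<N. W (t, False))"
    by (rule sum.reindex_bij_betw)
  then show ?thesis
    using assms by (simp add: sum_subtractf face_boundary_def)
qed

text \<open>How a face function jumps when the strand through passage \<open>t\<close> crosses the other strand there.\<close>

lemma face_jump:
  assumes inv: "\<forall>x \<in> darts D. W (face_perm N x) = W x" and c: "\<forall>e < N. c e = face_boundary W e"
    and t: "t < N"
  shows "W (t, True) - W (t, False) =
    (if lr D t then c (prev_pass t) - c (partner D t) else c t + c (partner D t))"
proof -
  have W_next_ccw: "W (next_ccw D y) = W (edge_mate y)" if "y \<in> darts D" for y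
  proof -
    have "W (face_perm N (edge_mate y)) = W (edge_mate y)"
      using inv edge_mate_in_darts[OF that] by blast
    then show ?thesis
      using edge_mate_edge_mate[OF that]
      by (simp add: face_perm_def edge_mate_below_npass edge_mate_in_darts[OF that])
  qed
  have pt: "partner D t < N" "partner D (partner D t) = t" "lr D (partner D t) = (\<not> lr D t)"
    using partner_spec[OF t] partner_partner[OF t] lr_partner[OF t] by auto
  have e1: "W (next_ccw D (t, True)) = W (t, True) - c t"
    using W_next_ccw[of "(t, True)"] c t by (simp add: mem_darts edge_mate_def face_boundary_def)
  have e2: "W (next_ccw D (t, False)) = c (prev_pass t) + W (t, False)"
    using W_next_ccw[of "(t, False)"] c t prev_pass_less[OF t] Suc_prev_pass[OF t]
    by (simp add: mem_darts edge_mate_def face_boundary_def)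
  have e3: "W (next_ccw D (partner D t, True)) = W (partner D t, True) - c (partner D t)"
    using W_next_ccw[of "(partner D t, True)"] c pt(1) by (simp add: mem_darts edge_mate_def face_boundary_def)
  show ?thesis
    using e1 e2 e3 pt by (cases "lr D t") (simp_all add: next_ccw_simp)
qed

lemma sum_sign_partner:
  "(\<Sum>t<N. (if lr D t then -1 else 1) * I (partner D t)) = (\<Sum>s<N. (if lr D s then 1 else -1) * (I s :: int))"
proof -
  have "(\<Sum>t<N. (if lr D t then -1 else 1) * I (partner D t)) =
      (\<Sum>t<N. (if lr D (partner D t) then 1 else -1) * I (partner D t))"
    by (intro sum.cong) (simp_all add: lr_partner)
  also have "\<dots> = (\<Sum>s<N. (if lr D s then 1 else -1) * I s)"
    by (rule sum.reindex_bij_betw[OF bij_betw_partner])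
  finally show ?thesis .
qed

text \<open>The loop from the over- to the under-passage of a crossing meets the rest of the diagram with
  algebraic intersection number zero: this is where planarity enters.\<close>

lemma loop_intersection_zero:
  assumes a: "a < N"
  shows "(\<Sum>s<N. if on_path D a (partner D a) s then (if lr D s then 1 else -1) else (0::int)) = 0"
proof -
  let ?u = "partner D a"
  define I where "I t = (if on_path D a ?u t then 1 else (0::int))" for t
  define sgn where "sgn t = (if lr D t then -1 else (1::int))" for t
  define ends where "ends t = (if \<not> lr D t \<and> (t = a \<or> t = ?u) then 1 else (0::int))" for t
  have u: "?u < N" "a \<noteq> ?u" "partner D ?u = a" "lr D ?u = (\<not> lr D a)"
    using partner_spec[OF a] partner_partner[OF a] lr_partner[OF a] by auto
  obtain W where W: "\<forall>x \<in> darts D. W (face_perm N x) = W x" "\<forall>e < N. loop_chain a e = face_boundary W e"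
    using cycle_is_face_boundary[OF order_refl is_cycle_loop_chain[OF a]]
    unfolding is_face_boundary_def by blast
  have not_on_ends: "\<not> on_path D a ?u a" "\<not> on_path D a ?u ?u"
    by (simp_all add: on_path_def)
  have c1: "loop_chain a t = I t + (if t = a then 1 else 0)" for t
    using not_on_ends by (auto simp: loop_chain_def I_def)
  have jump: "W (t, True) - W (t, False) = I t + sgn t * I (partner D t) + ends t"
    if t: "t < N" for t
  proof -
    have "partner D t = a \<longleftrightarrow> t = ?u"
      using partner_partner[OF t] u(3) by metis
    then have c3: "loop_chain a (partner D t) = I (partner D t) + (if t = ?u then 1 else 0)"
      using not_on_ends by (auto simp: loop_chain_def I_def)
    have c2: "loop_chain a (prev_pass t) = I t + (if t = ?u then 1 else 0)"
      using on_path_prev_pass[OF t a u(1,2)] not_on_ends by (auto simp: loop_chain_def I_def)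
    show ?thesis
      using face_jump[OF W t, unfolded c2 c3, unfolded c1] u(2) unfolding sgn_def ends_def
      by (cases "lr D t"; cases "t = a"; cases "t = ?u") simp_all
  qed
  have "(\<Sum>t<N. ends t) = (\<Sum>t<N. if t = (if lr D a then ?u else a) then 1 else 0)"
    using u by (intro sum.cong) (auto simp: ends_def)
  then have sum_ends: "(\<Sum>t<N. ends t) = 1"
    using a u(1) by simp
  have "(\<Sum>t<N. I t) + 1 = (\<Sum>t<N. loop_chain a t)"
    unfolding c1 using a by (simp add: sum.distrib)
  also have "\<dots> = (\<Sum>t<N. W (t, True) - W (t, False))"
    using sum_face_jump[OF W(2)] ..
  also have "\<dots> = (\<Sum>t<N. I t + sgn t * I (partner D t) + ends t)"
    using jump by (intro sum.cong) simp_all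
  also have "\<dots> = (\<Sum>t<N. I t) + (\<Sum>t<N. sgn t * I (partner D t)) + 1"
    using sum_ends by (simp add: sum.distrib)
  finally have "(\<Sum>t<N. sgn t * I (partner D t)) = 0"
    by simp
  then have "(\<Sum>s<N. (if lr D s then 1 else -1) * I s) = 0"
    unfolding sgn_def sum_sign_partner .
  moreover have "(\<Sum>s<N. (if lr D s then 1 else -1) * I s) =
      (\<Sum>s<N. if on_path D a ?u s then (if lr D s then 1 else -1) else 0)"
    by (intro sum.cong) (simp_all add: I_def)
  ultimately show ?thesis
    by simp
qed

lemma real_crossing_passages:
  assumes "k \<in> real_crossings D"
  shows "opass D k < N" "cr D (opass D k) = k" "upass D k = partner D (opass D k)" "\<not> virt D k"
proof -
  have k: "k < nc D" "\<not> virt D k" using assms by (auto simp: real_crossings_def)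
  have "{t. t < N \<and> cr D t = k} \<noteq> {}"
    using card_passages[OF k(1)] by (metis card.empty zero_neq_numeral)
  then obtain t0 where t0: "t0 < N" "cr D t0 = k" by blast
  let ?q = "partner D t0"
  have q: "?q < N" "cr D ?q = k" "?q \<noteq> t0" "ovr D ?q = (\<not> ovr D t0)"
    using partner_spec[OF t0(1)] ovr_partner[OF t0(1)] t0 k by auto
  have two: "t = t0 \<or> t = ?q" if "t < N" "cr D t = k" for t
    using partner_unique[OF t0(1) that(1)] that t0 by auto
  obtain a u where au: "a < N" "cr D a = k" "ovr D a" "u < N" "cr D u = k" "\<not> ovr D u" "u = partner D a"
    "\<And>t. t < N \<Longrightarrow> cr D t = k \<Longrightarrow> t = a \<or> t = u"
  proof (cases "ovr D t0")
    case True then show ?thesis using that[of t0 ?q] t0 q two by auto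
  next
    case False then show ?thesis using that[of ?q t0] t0 q two partner_partner[OF t0(1)] by auto
  qed
  have "opass D k = a" unfolding opass_def
    by (rule the_equality) (use au in auto)
  moreover have "upass D k = u" unfolding upass_def
    by (rule the_equality) (use au in auto)
  ultimately show "opass D k < N" "cr D (opass D k) = k" "upass D k = partner D (opass D k)" "\<not> virt D k"
    using au k by auto
qed

definition virtual_step :: "nat \<Rightarrow> int" where
  "virtual_step s = (if virt D (cr D s) then (if lr D s then -1 else 1) else 0)"

lemma shift_eq_sum: "shift D t = (\<Sum>s<t. virtual_step s)"
  unfolding shift_def virtual_step_def sum.inter_filter[symmetric, OF finite_lessThan]
  by (rule sum.cong) auto

lemma sum_virtual_step: "(\<Sum>s<N. virtual_step s) = 0"
proof -
  have "(\<Sum>s<N. virtual_step s) = (\<Sum>s<N. virtual_step (partner D s))"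
    using sum.reindex_bij_betw[OF bij_betw_partner, of virtual_step] by simp
  also have "\<dots> = (\<Sum>s<N. - virtual_step s)"
    by (rule sum.cong) (auto simp: virtual_step_def partner_spec lr_partner)
  finally show ?thesis by (simp add: sum_negf)
qed

text \<open>Since the loop meets the rest of the diagram with intersection number zero, the index counts,
  up to sign, the virtual crossings along the loop, which is what the cyclic shift records.\<close>

lemma ind_eq_shift_diff:
  assumes k: "k \<in> real_crossings D"
  shows "ind D k = shift D (upass D k) - shift D (opass D k)"
proof -
  let ?a = "opass D k" and ?u = "upass D k"
  have a: "?a < N" and u: "?u = partner D ?a" and real: "\<not> virt D (cr D ?a)"
    using real_crossing_passages[OF k] by auto
  have uN: "?u < N" and neq: "?a \<noteq> ?u" using partner_spec[OF a] u by auto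
  let ?L = "\<lambda>s. if lr D s then 1 else (-1::int)"
  have "ind D k = (\<Sum>s<N. if on_path D ?a ?u s \<and> \<not> virt D (cr D s) then ?L s else 0)"
    unfolding ind_def sum.inter_filter[symmetric, OF finite_lessThan]
    by (rule sum.cong) (auto simp: on_path_def)
  also have "\<dots> = (\<Sum>s<N. if on_path D ?a ?u s then ?L s else 0)
      + (\<Sum>s<N. if on_path D ?a ?u s then virtual_step s else 0)"
    unfolding sum.distrib[symmetric] by (rule sum.cong) (auto simp: virtual_step_def)
  also have "\<dots> = shift D ?u - shift D ?a"
    using loop_intersection_zero[OF a] sum_on_path[OF a uN neq sum_virtual_step] real u
    by (simp add: shift_eq_sum virtual_step_def)
  finally show ?thesis .
qed

end


section \<open>Linking numbers of the multiplexed link\<close>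

lemma cong_iff_eq_mod_plus_one:
  fixes q r :: nat and c :: int
  assumes "1 \<le> q" "q \<le> r"
  shows "[int q = c] (mod int r) \<longleftrightarrow> int q = (c - 1) mod int r + 1"
proof -
  have "(int q - 1) mod int r = int q - 1"
    using assms by simp
  moreover have "[int q = c] (mod int r) \<longleftrightarrow> (int q - 1) mod int r = (c - 1) mod int r"
    by (simp add: cong_iff_dvd_diff mod_eq_dvd_iff)
  ultimately show ?thesis
    by linarith
qed

lemma card_cong_atLeastAtMost:
  fixes r :: nat and c :: int
  assumes "0 < r"
  shows "card {q \<in> {1..r}. [int q = c] (mod int r)} = 1"
proof -
  define q0 where "q0 = nat ((c - 1) mod int r) + 1"
  have bounds: "0 \<le> (c - 1) mod int r" "(c - 1) mod int r < int r"
    using assms by simp_all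
  have "q \<in> {1..r} \<and> [int q = c] (mod int r) \<longleftrightarrow> q = q0" for q
  proof
    assume "q \<in> {1..r} \<and> [int q = c] (mod int r)"
    then show "q = q0"
      using cong_iff_eq_mod_plus_one[of q r c] by (auto simp: q0_def)
  next
    assume "q = q0"
    then have q: "1 \<le> q" "q \<le> r" "int q = (c - 1) mod int r + 1"
      using bounds by (auto simp: q0_def)
    then show "q \<in> {1..r} \<and> [int q = c] (mod int r)"
      using cong_iff_eq_mod_plus_one[OF q(1,2)] by simp
  qed
  then have "{q \<in> {1..r}. [int q = c] (mod int r)} = {q0}"
    by blast
  then show ?thesis by simp
qed

lemma mcomp_eq_iff:
  assumes "0 < r" "1 \<le> i" "i \<le> r"
  shows "mcomp D r t q = i \<longleftrightarrow> [int q = int i + shift D t] (mod int r)"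
proof -
  have "0 \<le> (int q - 1 - shift D t) mod int r"
    using assms by simp
  then have "mcomp D r t q = i \<longleftrightarrow> int i = (int q - shift D t - 1) mod int r + 1"
    unfolding mcomp_def by (auto simp: algebra_simps)
  also have "\<dots> \<longleftrightarrow> [int i = int q - shift D t] (mod int r)"
    using cong_iff_eq_mod_plus_one[OF assms(2,3)] ..
  also have "\<dots> \<longleftrightarrow> [int q = int i + shift D t] (mod int r)"
    by (simp add: cong_iff_dvd_diff algebra_simps dvd_diff_commute)
  finally show ?thesis .
qed

lemma card_strands_between:
  assumes "0 < r" "1 \<le> i" "i \<le> r" "1 \<le> j" "j \<le> r"
  shows "card {q \<in> {1..r}. mcomp D r a q = i \<and> mcomp D r b q = j} =
    (if [shift D b - shift D a = int i - int j] (mod int r) then 1 else 0)"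
proof -
  let ?sa = "shift D a" and ?sb = "shift D b"
  have "[int q = int j + ?sb] (mod int r) \<longleftrightarrow> [?sb - ?sa = int i - int j] (mod int r)"
    if "[int q = int i + ?sa] (mod int r)" for q
  proof -
    have "[int q = int j + ?sb] (mod int r) \<longleftrightarrow> [int i + ?sa = int j + ?sb] (mod int r)"
      using that by (meson cong_sym cong_trans)
    also have "\<dots> \<longleftrightarrow> [?sb - ?sa = int i - int j] (mod int r)"
      by (simp add: cong_iff_dvd_diff dvd_diff_commute algebra_simps)
    finally show ?thesis .
  qed
  then have "{q \<in> {1..r}. mcomp D r a q = i \<and> mcomp D r b q = j} =
      (if [?sb - ?sa = int i - int j] (mod int r)
       then {q \<in> {1..r}. [int q = int i + ?sa] (mod int r)} else {})"
    using mcomp_eq_iff[OF assms(1-3)] mcomp_eq_iff[OF assms(1,4,5)] by auto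
  then show ?thesis
    using card_cong_atLeastAtMost[OF assms(1)] by simp
qed

lemma Lk_mplx_eq_sum_shift:
  assumes "0 < r" "1 \<le> i" "i \<le> r" "1 \<le> j" "j \<le> r"
  shows "Lk_mplx D r i j = (\<Sum>k \<in> {k \<in> real_crossings D.
     [shift D (upass D k) - shift D (opass D k) = int i - int j] (mod int r)}. csign D k)"
proof -
  let ?strands = "\<lambda>k. {q \<in> {1..r}. mcomp D r (opass D k) q = i \<and> mcomp D r (upass D k) q = j}"
  have fin: "finite (real_crossings D)"
    by (simp add: real_crossings_def)
  have "{c \<in> mplx_real_crossings D r. mplx_over_comp D r c = i \<and> mplx_under_comp D r c = j} =
      Sigma (real_crossings D) ?strands"
    by (auto simp: mplx_real_crossings_def mplx_over_comp_def mplx_under_comp_def)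
  moreover have "(\<Sum>k \<in> real_crossings D. \<Sum>q \<in> ?strands k. csign D k) =
      (\<Sum>c \<in> Sigma (real_crossings D) ?strands. csign D (fst c))"
    using fin by (subst sum.Sigma) (auto simp: split_def)
  ultimately have "Lk_mplx D r i j = (\<Sum>k \<in> real_crossings D. \<Sum>q \<in> ?strands k. csign D k)"
    by (simp add: Lk_mplx_def mplx_sign_def)
  also have "\<dots> = (\<Sum>k \<in> real_crossings D.
      if [shift D (upass D k) - shift D (opass D k) = int i - int j] (mod int r) then csign D k else 0)"
    using card_strands_between[OF assms] by (intro sum.cong) auto
  finally show ?thesis
    using fin by (simp add: sum.inter_filter)
qed

lemma real_crossings_shift_diff_eq_ind:
  assumes "wf_vdiag D"
  shows "{k \<in> real_crossings D. P (shift D (upass D k) - shift D (opass D k))} =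
         {k \<in> real_crossings D. P (ind D k)}"
proof (cases "nc D = 0")
  case True
  then show ?thesis by (simp add: real_crossings_def)
next
  case False
  then interpret diagram D
    using assms by unfold_locales simp_all
  show ?thesis
    using ind_eq_shift_diff by auto
qed

lemma sum_real_crossings_by_ind:
  "(\<Sum>k \<in> {k \<in> real_crossings D. P (ind D k)}. csign D k) = (\<Sum>n \<in> {n. P n \<and> J D n \<noteq> 0}. J D n)"
proof -
  let ?S = "{k \<in> real_crossings D. P (ind D k)}"
  have fin: "finite ?S"
    by (simp add: real_crossings_def)
  have "(\<Sum>k \<in> ?S. csign D k) = (\<Sum>n \<in> ind D ` ?S. \<Sum>k \<in> {k \<in> ?S. ind D k = n}. csign D k)"
    using fin by (rule sum.image_gen)
  also have "\<dots> = (\<Sum>n \<in> ind D ` ?S. J D n)"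
  proof (rule sum.cong[OF refl])
    fix n assume "n \<in> ind D ` ?S"
    then have "{k \<in> ?S. ind D k = n} = {k \<in> real_crossings D. ind D k = n}"
      by auto
    then show "(\<Sum>k \<in> {k \<in> ?S. ind D k = n}. csign D k) = J D n"
      by (simp add: J_def)
  qed
  also have "\<dots> = (\<Sum>n \<in> {n. P n \<and> J D n \<noteq> 0}. J D n)"
  proof (rule sum.mono_neutral_right)
    show "{n. P n \<and> J D n \<noteq> 0} \<subseteq> ind D ` ?S"
    proof
      fix n assume n: "n \<in> {n. P n \<and> J D n \<noteq> 0}"
      have "{k \<in> real_crossings D. ind D k = n} \<noteq> {}"
      proof
        assume empty: "{k \<in> real_crossings D. ind D k = n} = {}"
        have "J D n = 0"
          unfolding J_def empty by simp
        with n show False by simp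
      qed
      then obtain k where "k \<in> real_crossings D" "ind D k = n" by blast
      with n show "n \<in> ind D ` ?S" by blast
    qed
    show "finite (ind D ` ?S)"
      using fin by simp
    show "\<forall>n \<in> ind D ` ?S - {n. P n \<and> J D n \<noteq> 0}. J D n = 0"
      by auto
  qed
  finally show ?thesis .
qed

theorem theorem1p2:
  fixes D :: vdiag and r i j :: nat
  assumes "wf_vdiag D"
    and "r \<ge> 2"
    and "1 \<le> i" and "i \<le> r" and "1 \<le> j" and "j \<le> r" and "i \<noteq> j"
  shows "Lk_mplx D r i j =
           (\<Sum>n \<in> {n. [n = int i - int j] (mod int r) \<and> J D n \<noteq> 0}. J D n)"
proof -
  have "Lk_mplx D r i j = (\<Sum>k \<in> {k \<in> real_crossings D.
      [shift D (upass D k) - shift D (opass D k) = int i - int j] (mod int r)}. csign D k)"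
    using assms by (intro Lk_mplx_eq_sum_shift) auto
  also have "\<dots> = (\<Sum>k \<in> {k \<in> real_crossings D. [ind D k = int i - int j] (mod int r)}. csign D k)"
    using real_crossings_shift_diff_eq_ind[OF assms(1), of "\<lambda>d. [d = int i - int j] (mod int r)"]
    by simp
  also have "\<dots> = (\<Sum>n \<in> {n. [n = int i - int j] (mod int r) \<and> J D n \<noteq> 0}. J D n)"
    by (rule sum_real_crossings_by_ind)
  finally show ?thesis .
qed

end
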